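(* Let $\mathsf K_{\rm c}\in[\mathsf K]$, $\mathsf m\in[\mathsf N_{\rm r}]$ and $\mathsf M=\frac{\mathsf K}{\mathsf N}(\mathsf N-\mathsf N_{\rm r}+\mathsf m)$. For any linear-coding based scheme for the non-secure distributed linearly separable computation problem with parameters $(\mathsf K,\mathsf N,\mathsf N_{\rm r},\mathsf K_{\rm c},\mathsf M)$, there exists a secure scheme (satisfying the security constraint) with the same assignment and without increasing the communication cost.
   Context: Setting: positive integers $\mathsf K,\mathsf N,\mathsf N_{\rm r}$ with $\mathsf N_{\rm r}\le\mathsf N$, $\mathsf N\mid\mathsf K$; a finite field $\mathbb F_{\mathsf q}$ ($\mathsf q$ a sufficiently large prime power) and integer $\mathsf L$. Messages $W_1,\dots,W_{\mathsf K}$ are independent, each uniform over $\mathbb F_{\mathsf q}^{\mathsf L}$ ($W_k$ is a function of dataset $D_k$). The user wants $\mathbf G[W_1;\dots;W_{\mathsf K}]$ for a given $\mathsf K_{\rm c}\times\mathsf K$ matrix $\mathbf G$ over $\mathbb F_{\mathsf q}$. Non-secure problem: an assignment $\mathcal Z_n\subseteq[\mathsf K]$, $|\mathcal Z_n|\le\mathsf M$, for each server $n\in[\mathsf N]$; server $n$ sends $X_n\in\mathbb F_{\mathsf q}^{\mathsf T_n}$, a function of $\{W_k:k\in\mathcal Z_n\}$; for every $\mathcal A\subseteq[\mathsf N]$ with $|\mathcal A|=\mathsf N_{\rm r}$ the user can compute $\mathbf G[W_1;\dots;W_{\mathsf K}]$ from $\{X_n:n\in\mathcal A\}$. Communication cost: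 $\max_{|\mathcal A|=\mathsf N_{\rm r}}\sum_{n\in\mathcal A}\mathsf T_n/\mathsf L$. A scheme is linear-coding based if, for some $\ell$ dividing $\mathsf L$, each $W_k$ is split into $\ell$ equal-length sub-messages $W_{k,1},\dots,W_{k,\ell}\in\mathbb F_{\mathsf q}^{\mathsf L/\ell}$, each server $n$ sends $\ell\mathsf T_n/\mathsf L$ linear combinations (with fixed coefficients in $\mathbb F_{\mathsf q}$) of the sub-messages $W_{k,j}$, $k\in\mathcal Z_n$, and decoding is linear. A secure scheme additionally uses a random variable $Q$ independent of the datasets, given to all servers but not to the user, with $X_n$ a function of $(\{W_k:k\in\mathcal Z_n\},Q)$, the same decodability requirement (the user does not know $Q$), and the security constraint $I(W_1,\dots,W_{\mathsf K};X_1,\dots,X_{\mathsf N}\mid\mathbf G[W_1;\dots;W_{\mathsf K}])=0$. *)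

theory Defs
  imports "HOL-Probability.Probability"
begin

(* Messages W_1..W_K, each in F^L, are encoded as w :: nat => nat => 'f,
   w k p = p-th symbol of W_{k+1}  (0-based: k < K, p < L); entries outside are 0. *)
type_synonym 'f msgs = "nat \<Rightarrow> nat \<Rightarrow> 'f"

definition msg_space :: "nat \<Rightarrow> nat \<Rightarrow> ('f::zero) msgs set" where
  "msg_space K L = {w. \<forall>k j. (K \<le> k \<or> L \<le> j) \<longrightarrow> w k j = 0}"

definition restrict_msgs :: "nat \<Rightarrow> nat \<Rightarrow> ('f::zero) msgs \<Rightarrow> 'f msgs" where
  "restrict_msgs K L w = (\<lambda>k j. if k < K \<and> j < L then w k j else 0)"

definition Gprod :: "nat \<Rightarrow> nat \<Rightarrow> nat \<Rightarrow> (nat \<Rightarrow> nat \<Rightarrow> 'f::comm_ring_1) \<Rightarrow> 'f msgs \<Rightarrow> nat \<Rightarrow> nat \<Rightarrow> 'f" where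
  "Gprod K Kc L G w = (\<lambda>i p. if i < Kc \<and> p < L then (\<Sum>k<K. G i k * w k p) else 0)"

definition valid_assignment :: "nat \<Rightarrow> nat \<Rightarrow> nat \<Rightarrow> (nat \<Rightarrow> nat set) \<Rightarrow> bool" where
  "valid_assignment K N M Z \<longleftrightarrow> (\<forall>n<N. Z n \<subseteq> {..<K} \<and> card (Z n) \<le> M)"

definition comm_cost :: "nat \<Rightarrow> nat \<Rightarrow> (nat \<Rightarrow> nat) \<Rightarrow> nat \<Rightarrow> real" where
  "comm_cost N Nr T L = Max {(\<Sum>n\<in>A. real (T n)) / real L | A. A \<subseteq> {..<N} \<and> card A = Nr}"

(* Linear-coding based scheme: each W_k is split into l sub-messages of length L/l,
   W_{k,j} = symbols j*(L div l) .. (j+1)*(L div l) - 1 of W_k (j < l).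
   Server n sends t n linear combinations (coefficients c n r k j, r < t n) of the
   sub-messages, i.e. T_n = t n * (L div l) symbols; symbol s = r*(L div l) + p. *)
definition lin_tx :: "nat \<Rightarrow> nat \<Rightarrow> nat \<Rightarrow> (nat \<Rightarrow> nat) \<Rightarrow>
    (nat \<Rightarrow> nat \<Rightarrow> nat \<Rightarrow> nat \<Rightarrow> 'f::comm_ring_1) \<Rightarrow> nat \<Rightarrow> 'f msgs \<Rightarrow> nat \<Rightarrow> 'f" where
  "lin_tx K L l t c n w s =
     (if s < t n * (L div l) then
        (\<Sum>k<K. \<Sum>j<l. c n (s div (L div l)) k j * w k (j * (L div l) + s mod (L div l)))
      else 0)"

definition linear_scheme :: "nat \<Rightarrow> nat \<Rightarrow> nat \<Rightarrow> nat \<Rightarrow> nat \<Rightarrow> nat \<Rightarrow>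
    (nat \<Rightarrow> nat \<Rightarrow> 'f::comm_ring_1) \<Rightarrow> (nat \<Rightarrow> nat set) \<Rightarrow> nat \<Rightarrow> (nat \<Rightarrow> nat) \<Rightarrow>
    (nat \<Rightarrow> nat \<Rightarrow> nat \<Rightarrow> nat \<Rightarrow> 'f) \<Rightarrow> (nat set \<Rightarrow> nat \<Rightarrow> nat \<Rightarrow> nat \<Rightarrow> nat \<Rightarrow> 'f) \<Rightarrow> bool" where
  "linear_scheme K N Nr Kc M L G Z l t c e \<longleftrightarrow>
     0 < l \<and> l dvd L \<and> valid_assignment K N M Z \<and>
     (\<forall>n r k j. k \<notin> Z n \<longrightarrow> c n r k j = 0) \<and>
     (\<forall>A. A \<subseteq> {..<N} \<and> card A = Nr \<longrightarrow>
        (\<forall>w\<in>msg_space K L. \<forall>i<Kc. \<forall>p<L.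
           (\<Sum>k<K. G i k * w k p) =
           (\<Sum>n\<in>A. \<Sum>s < t n * (L div l). e A i p n s * lin_tx K L l t c n w s)))"

definition lin_lengths :: "nat \<Rightarrow> nat \<Rightarrow> (nat \<Rightarrow> nat) \<Rightarrow> nat \<Rightarrow> nat" where
  "lin_lengths L l t n = t n * (L div l)"

definition secure_scheme :: "nat \<Rightarrow> nat \<Rightarrow> nat \<Rightarrow> nat \<Rightarrow> nat \<Rightarrow> nat \<Rightarrow>
    (nat \<Rightarrow> nat \<Rightarrow> 'f::{finite,field}) \<Rightarrow> (nat \<Rightarrow> nat set) \<Rightarrow> (nat \<Rightarrow> nat) \<Rightarrow>
    (nat \<Rightarrow> 'f msgs \<Rightarrow> 'q \<Rightarrow> nat \<Rightarrow> 'f) \<Rightarrow> 'q pmf \<Rightarrow> bool" where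
  "secure_scheme K N Nr Kc M L G Z T enc Qd \<longleftrightarrow>
     valid_assignment K N M Z \<and>
     (\<forall>n<N. \<forall>w w' q. (\<forall>k\<in>Z n. w k = w' k) \<longrightarrow> enc n w q = enc n w' q) \<and>
     (\<forall>n<N. \<forall>w q s. T n \<le> s \<longrightarrow> enc n w q s = 0) \<and>
     (\<forall>A. A \<subseteq> {..<N} \<and> card A = Nr \<longrightarrow>
        (\<exists>dec :: (nat \<Rightarrow> nat \<Rightarrow> 'f) \<Rightarrow> 'f msgs.
           \<forall>w\<in>msg_space K L. \<forall>q\<in>set_pmf Qd.
             dec (\<lambda>n. if n \<in> A then enc n w q else (\<lambda>_. 0)) = Gprod K Kc L G w)) \<and>
     (let P = measure_pmf (pair_pmf (pmf_of_set (msg_space K L)) Qd);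
          Wv = (\<lambda>\<omega>. restrict_msgs K L (fst \<omega>));
          Xv = (\<lambda>\<omega>. \<lambda>n. if n < N then enc n (fst \<omega>) (snd \<omega>) else (\<lambda>_. 0));
          Gv = (\<lambda>\<omega>. Gprod K Kc L G (fst \<omega>))
      in prob_space.conditional_mutual_information P 2
           (count_space (Wv ` space P)) (count_space (Xv ` space P)) (count_space (Gv ` space P))
           Wv Xv Gv = 0)"

end

theory Submission
  imports Defs "HOL-Library.Function_Algebras"
begin

(* The servers share a mask V drawn uniformly from the kernel {v. G v = 0} of the demand
   and run the given linear scheme on W + V instead of W.  Linear decoding then returns
   G (W + V) = G W, and the assignment and the loads are unchanged.  Given W = w the
   transmissions are a function of w + V, which is uniform on the coset w + ker G; this
   coset only depends on G w, so the transmissions are independent of W given G W. *)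

section \<open>Conditional independence in finite product distributions\<close>

lemma measure_pair_pmf_Times:
  "measure (pair_pmf p q) (A \<times> B) = measure p A * measure q B"
proof -
  have "measure (pair_pmf p q) (A \<times> B) = measure (pair_pmf p q) ((A \<inter> set_pmf p) \<times> (B \<inter> set_pmf q))"
    by (subst measure_Int_set_pmf[symmetric]) (auto intro!: arg_cong[where f = "measure _"])
  also have "\<dots> = measure p (A \<inter> set_pmf p) * measure q (B \<inter> set_pmf q)"
    by (rule measure_pmf_prob_product) auto
  finally show ?thesis by (simp add: measure_Int_set_pmf)
qed

lemma cond_indep_log_term_eq_0:
  fixes a b c d :: real
  assumes "a * d = b * c" and "0 \<le> a" and "a \<le> d"
  shows "a * log \<beta> (a / (b * (c / d))) = 0"
proof (cases "a = 0")
  case False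
  with assms have "b * (c / d) = a" by (simp add: field_simps)
  with False show ?thesis by simp
qed simp

lemma conditional_mutual_information_eq_0_if_cond_indep:
  fixes p :: "'a pmf" and X :: "'a \<Rightarrow> 'x" and Y :: "'a \<Rightarrow> 'y" and Z :: "'a \<Rightarrow> 'z"
  assumes "1 < b" and "finite (range X)" and "finite (range Y)" and "finite (range Z)"
    and cond_indep: "\<And>x y z.
      measure p {\<omega>. X \<omega> = x \<and> Y \<omega> = y \<and> Z \<omega> = z} * measure p {\<omega>. Z \<omega> = z}
      = measure p {\<omega>. X \<omega> = x \<and> Z \<omega> = z} * measure p {\<omega>. Y \<omega> = y \<and> Z \<omega> = z}"
  shows "prob_space.conditional_mutual_information (measure_pmf p) b
     (count_space (X ` space (measure_pmf p))) (count_space (Y ` space (measure_pmf p)))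
     (count_space (Z ` space (measure_pmf p))) X Y Z = 0" (is "?I = 0")
proof -
  interpret information_space "measure_pmf p" b
    by unfold_locales (rule assms(1))
  have simple: "simple_function (measure_pmf p) f" if "finite (range f)" for f :: "'a \<Rightarrow> 'c"
    using that by (simp add: simple_function_def)
  have distr: "simple_distributed (measure_pmf p) f (\<lambda>u. measure p (f -` {u}))"
    if "finite (range f)" for f :: "'a \<Rightarrow> 'c"
    by (rule measure_pmf.simple_distributedI[OF simple[OF that] measure_nonneg]) simp
  have finite_pair: "finite (range (\<lambda>\<omega>. (f \<omega>, g \<omega>)))"
    if "finite (range f)" and "finite (range g)" for f :: "'a \<Rightarrow> 'c" and g :: "'a \<Rightarrow> 'd"
    using that finite_subset[of "range (\<lambda>\<omega>. (f \<omega>, g \<omega>))" "range f \<times> range g"] by auto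
  let ?P = "\<lambda>V u. measure p (V -` {u})"
  have "?I =
    (\<Sum>(x, y, z)\<in>(\<lambda>\<omega>. (X \<omega>, Y \<omega>, Z \<omega>)) ` space (measure_pmf p).
      ?P (\<lambda>\<omega>. (X \<omega>, Y \<omega>, Z \<omega>)) (x, y, z) *
      log b (?P (\<lambda>\<omega>. (X \<omega>, Y \<omega>, Z \<omega>)) (x, y, z) /
        (?P (\<lambda>\<omega>. (X \<omega>, Z \<omega>)) (x, z) * (?P (\<lambda>\<omega>. (Y \<omega>, Z \<omega>)) (y, z) / ?P Z z))))"
    by (rule conditional_mutual_information_eq[OF distr distr distr distr])
      (intro assms finite_pair)+
  also have "\<dots> = 0"
  proof (intro sum.neutral ballI, clarify)
    fix x y z
    have sets: "(\<lambda>\<omega>. (X \<omega>, Y \<omega>, Z \<omega>)) -` {(x, y, z)} = {\<omega>. X \<omega> = x \<and> Y \<omega> = y \<and> Z \<omega> = z}"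
      "(\<lambda>\<omega>. (X \<omega>, Z \<omega>)) -` {(x, z)} = {\<omega>. X \<omega> = x \<and> Z \<omega> = z}"
      "(\<lambda>\<omega>. (Y \<omega>, Z \<omega>)) -` {(y, z)} = {\<omega>. Y \<omega> = y \<and> Z \<omega> = z}"
      "Z -` {z} = {\<omega>. Z \<omega> = z}"
      by auto
    have "measure p {\<omega>. X \<omega> = x \<and> Y \<omega> = y \<and> Z \<omega> = z} \<le> measure p {\<omega>. Z \<omega> = z}"
      by (rule measure_pmf.finite_measure_mono) auto
    then show "?P (\<lambda>\<omega>. (X \<omega>, Y \<omega>, Z \<omega>)) (x, y, z) *
      log b (?P (\<lambda>\<omega>. (X \<omega>, Y \<omega>, Z \<omega>)) (x, y, z) /
        (?P (\<lambda>\<omega>. (X \<omega>, Z \<omega>)) (x, z) * (?P (\<lambda>\<omega>. (Y \<omega>, Z \<omega>)) (y, z) / ?P Z z))) = 0"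
      unfolding sets by (intro cond_indep_log_term_eq_0 cond_indep measure_nonneg)
  qed
  finally show ?thesis .
qed

lemma measure_pmf_eq_sum_fibres:
  fixes p :: "'a pmf" and W :: "'a \<Rightarrow> 'w"
  assumes "finite (range W)"
  shows "measure p {\<omega>. P (W \<omega>) \<and> Q \<omega>} = (\<Sum>w\<in>{w \<in> range W. P w}. measure p {\<omega>. W \<omega> = w \<and> Q \<omega>})"
proof -
  have "{\<omega>. P (W \<omega>) \<and> Q \<omega>} = (\<Union>w\<in>{w \<in> range W. P w}. {\<omega>. W \<omega> = w \<and> Q \<omega>})"
    by auto
  moreover have "disjoint_family_on (\<lambda>w. {\<omega>. W \<omega> = w \<and> Q \<omega>}) {w \<in> range W. P w}"
    by (auto simp: disjoint_family_on_def)
  ultimately show ?thesis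
    using assms by (simp add: measure_pmf.finite_measure_finite_Union)
qed

lemma cond_indep_if_kernel_factors:
  fixes p :: "'a pmf" and W :: "'a \<Rightarrow> 'w" and X :: "'a \<Rightarrow> 'x" and g :: "'w \<Rightarrow> 'z"
    and k :: "'w \<Rightarrow> 'x \<Rightarrow> real"
  assumes finite: "finite (range W)"
    and kernel: "\<And>w y. measure p {\<omega>. W \<omega> = w \<and> X \<omega> = y} = measure p {\<omega>. W \<omega> = w} * k w y"
    and factors: "\<And>w w' y. measure p {\<omega>. W \<omega> = w} \<noteq> 0 \<Longrightarrow> measure p {\<omega>. W \<omega> = w'} \<noteq> 0 \<Longrightarrow>
      g w = g w' \<Longrightarrow> k w y = k w' y"
  shows "measure p {\<omega>. W \<omega> = x \<and> X \<omega> = y \<and> g (W \<omega>) = z} * measure p {\<omega>. g (W \<omega>) = z}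
       = measure p {\<omega>. W \<omega> = x \<and> g (W \<omega>) = z} * measure p {\<omega>. X \<omega> = y \<and> g (W \<omega>) = z}"
proof (cases "g x = z \<and> measure p {\<omega>. W \<omega> = x} \<noteq> 0")
  case True
  let ?R = "{w \<in> range W. g w = z}"
  have "measure p {\<omega>. X \<omega> = y \<and> g (W \<omega>) = z} = (\<Sum>w\<in>?R. measure p {\<omega>. W \<omega> = w \<and> X \<omega> = y})"
    using measure_pmf_eq_sum_fibres[OF finite, where P = "\<lambda>w. g w = z" and Q = "\<lambda>\<omega>. X \<omega> = y"]
    by (simp add: conj_commute)
  also have "\<dots> = (\<Sum>w\<in>?R. measure p {\<omega>. W \<omega> = w} * k x y)"
    using True by (intro sum.cong refl) (auto simp: kernel dest: factors)
  also have "\<dots> = measure p {\<omega>. g (W \<omega>) = z} * k x y"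
    using measure_pmf_eq_sum_fibres[OF finite, where P = "\<lambda>w. g w = z" and Q = "\<lambda>_. True"]
    by (simp add: sum_distrib_right)
  moreover have "{\<omega>. W \<omega> = x \<and> X \<omega> = y \<and> g (W \<omega>) = z} = {\<omega>. W \<omega> = x \<and> X \<omega> = y}"
    and "{\<omega>. W \<omega> = x \<and> g (W \<omega>) = z} = {\<omega>. W \<omega> = x}"
    using True by auto
  ultimately show ?thesis
    by (simp add: kernel)
next
  case False
  then have "measure p {\<omega>. W \<omega> = x \<and> X \<omega> = y \<and> g (W \<omega>) = z} = 0"
    and "measure p {\<omega>. W \<omega> = x \<and> g (W \<omega>) = z} = 0"
    by (auto simp: measure_pmf_zero_iff)
  then show ?thesis
    by simp
qed

lemma conditional_mutual_information_eq_0_if_law_factors: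
  fixes p :: "'a pmf" and q :: "'b pmf" and f :: "'a \<Rightarrow> 'w" and F :: "'w \<Rightarrow> 'b \<Rightarrow> 'x"
    and g :: "'w \<Rightarrow> 'z"
  assumes "1 < b" and finite: "finite (range f)" and "finite (range (case_prod F))"
    and law: "\<And>w w'. w \<in> f ` set_pmf p \<Longrightarrow> w' \<in> f ` set_pmf p \<Longrightarrow> g w = g w' \<Longrightarrow>
      map_pmf (F w) q = map_pmf (F w') q"
  shows "prob_space.conditional_mutual_information (measure_pmf (pair_pmf p q)) b
     (count_space ((\<lambda>\<omega>. f (fst \<omega>)) ` space (measure_pmf (pair_pmf p q))))
     (count_space ((\<lambda>\<omega>. F (f (fst \<omega>)) (snd \<omega>)) ` space (measure_pmf (pair_pmf p q))))
     (count_space ((\<lambda>\<omega>. g (f (fst \<omega>))) ` space (measure_pmf (pair_pmf p q))))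
     (\<lambda>\<omega>. f (fst \<omega>)) (\<lambda>\<omega>. F (f (fst \<omega>)) (snd \<omega>)) (\<lambda>\<omega>. g (f (fst \<omega>))) = 0"
proof -
  let ?W = "\<lambda>\<omega>. f (fst \<omega>)" and ?X = "\<lambda>\<omega>. F (f (fst \<omega>)) (snd \<omega>)"
  have marginal: "measure (pair_pmf p q) {\<omega>. ?W \<omega> = w} = measure p {a. f a = w}" for w
  proof -
    have "measure (pair_pmf p q) {\<omega>. ?W \<omega> = w} = measure (pair_pmf p q) ({a. f a = w} \<times> UNIV)"
      by (rule arg_cong[where f = "measure _"]) auto
    then show ?thesis
      by (simp add: measure_pair_pmf_Times measure_pmf.prob_space)
  qed
  have kernel: "measure (pair_pmf p q) {\<omega>. ?W \<omega> = w \<and> ?X \<omega> = y} =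
      measure (pair_pmf p q) {\<omega>. ?W \<omega> = w} * measure q {r. F w r = y}" for w y
  proof -
    have "measure (pair_pmf p q) {\<omega>. ?W \<omega> = w \<and> ?X \<omega> = y} =
        measure (pair_pmf p q) ({a. f a = w} \<times> {r. F w r = y})"
      by (rule arg_cong[where f = "measure _"]) auto
    then show ?thesis
      by (simp add: marginal measure_pair_pmf_Times)
  qed
  have in_support: "w \<in> f ` set_pmf p" if "measure (pair_pmf p q) {\<omega>. ?W \<omega> = w} \<noteq> 0" for w
    using that by (auto simp: marginal measure_pmf_zero_iff)
  have factors: "measure q {r. F w r = y} = measure q {r. F w' r = y}"
    if "measure (pair_pmf p q) {\<omega>. ?W \<omega> = w} \<noteq> 0" and "measure (pair_pmf p q) {\<omega>. ?W \<omega> = w'} \<noteq> 0"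
      and "g w = g w'" for w w' y
  proof -
    have "pmf (map_pmf (F w) q) y = pmf (map_pmf (F w') q) y"
      using law[OF in_support in_support, OF that] by simp
    then show ?thesis
      by (simp add: pmf_map vimage_def)
  qed
  have finite_W: "finite (range ?W)" and finite_gW: "finite (range (\<lambda>\<omega>. g (?W \<omega>)))"
    using finite by (auto intro: finite_subset[of _ "range f"] finite_subset[of _ "g ` range f"])
  have finite_X: "finite (range ?X)"
    using assms(3) by (rule finite_subset[rotated]) auto
  show ?thesis
    by (rule conditional_mutual_information_eq_0_if_cond_indep[OF assms(1) finite_W finite_X finite_gW],
        rule cond_indep_if_kernel_factors[where g = g, OF finite_W kernel factors])
qed

section \<open>Uniform masks from the kernel of the demand\<close>

lemma map_pmf_plus_pmf_of_set_eq:
  fixes H :: "'a::ab_group_add set"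
  assumes "finite H" and "H \<noteq> {}"
    and diff_closed: "\<And>u v. u \<in> H \<Longrightarrow> v \<in> H \<Longrightarrow> u - v \<in> H"
    and "w - w' \<in> H"
  shows "map_pmf (\<lambda>v. w + v) (pmf_of_set H) = map_pmf (\<lambda>v. w' + v) (pmf_of_set H)"
proof -
  obtain a where "a \<in> H"
    using assms(2) by blast
  then have "0 \<in> H"
    using diff_closed[of a a] by simp
  then have "w' - w \<in> H"
    using diff_closed[OF _ assms(4), of 0] by simp
  then have "v + (w - w') \<in> H" if "v \<in> H" for v
    using diff_closed[OF that, of "w' - w"] by (simp add: algebra_simps)
  then have shift: "bij_betw (\<lambda>v. v + (w - w')) H H"
    by (intro bij_betw_byWitness[where f' = "\<lambda>v. v - (w - w')"]) (auto simp: assms(4) diff_closed)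
  have "map_pmf (\<lambda>v. w + v) (pmf_of_set H) =
      map_pmf (\<lambda>v. w' + v) (map_pmf (\<lambda>v. v + (w - w')) (pmf_of_set H))"
    by (simp add: pmf.map_comp o_def algebra_simps)
  also have "map_pmf (\<lambda>v. v + (w - w')) (pmf_of_set H) = pmf_of_set H"
    by (rule map_pmf_of_set_bij_betw[OF shift assms(2,1)])
  finally show ?thesis .
qed

lemma finite_msg_space: "finite (msg_space K L :: ('f::{finite,zero}) msgs set)"
proof (rule finite_subset)
  show "msg_space K L \<subseteq>
      (\<lambda>h k j. if k < K \<and> j < L then h (k, j) else 0) ` (({..<K} \<times> {..<L}) \<rightarrow>\<^sub>E (UNIV :: 'f set))"
  proof
    fix w :: "'f msgs"
    assume "w \<in> msg_space K L"
    then show "w \<in> (\<lambda>h k j. if k < K \<and> j < L then h (k, j) else 0) ` (({..<K} \<times> {..<L}) \<rightarrow>\<^sub>E UNIV)"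
      by (intro image_eqI[where x = "\<lambda>(k, j)\<in>{..<K} \<times> {..<L}. w k j"])
        (auto simp: msg_space_def fun_eq_iff)
  qed
qed (intro finite_imageI finite_PiE; simp)

lemma zero_in_msg_space: "0 \<in> msg_space K L"
  by (simp add: msg_space_def)

lemma msg_space_add: "u \<in> msg_space K L \<Longrightarrow> v \<in> msg_space K L \<Longrightarrow> u + v \<in> msg_space K L"
  for u v :: "('f::monoid_add) msgs"
  by (simp add: msg_space_def)

lemma msg_space_diff: "u \<in> msg_space K L \<Longrightarrow> v \<in> msg_space K L \<Longrightarrow> u - v \<in> msg_space K L"
  for u v :: "('f::group_add) msgs"
  by (simp add: msg_space_def)

lemma restrict_msgs_in_msg_space: "restrict_msgs K L w \<in> msg_space K L"
  by (simp add: restrict_msgs_def msg_space_def)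

lemma restrict_msgs_eq_self: "w \<in> msg_space K L \<Longrightarrow> restrict_msgs K L w = w"
  by (auto simp: restrict_msgs_def msg_space_def fun_eq_iff)

lemma Gprod_restrict_msgs: "Gprod K Kc L G (restrict_msgs K L w) = Gprod K Kc L G w"
  by (auto simp: Gprod_def restrict_msgs_def fun_eq_iff intro!: sum.cong)

lemma Gprod_add: "Gprod K Kc L G (u + v) = Gprod K Kc L G u + Gprod K Kc L G v"
  by (auto simp: Gprod_def sum.distrib distrib_left fun_eq_iff)

lemma Gprod_diff: "Gprod K Kc L G (u - v) = Gprod K Kc L G u - Gprod K Kc L G v"
  for G :: "nat \<Rightarrow> nat \<Rightarrow> 'f::comm_ring_1"
  by (auto simp: Gprod_def sum_subtractf right_diff_distrib fun_eq_iff)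

definition Gprod_kernel :: "nat \<Rightarrow> nat \<Rightarrow> nat \<Rightarrow> (nat \<Rightarrow> nat \<Rightarrow> 'f::comm_ring_1) \<Rightarrow> 'f msgs set" where
  "Gprod_kernel K Kc L G = {v \<in> msg_space K L. Gprod K Kc L G v = 0}"

lemma Gprod_kernel_not_empty: "Gprod_kernel K Kc L G \<noteq> {}"
proof -
  have "0 \<in> Gprod_kernel K Kc L G"
    by (auto simp: Gprod_kernel_def zero_in_msg_space Gprod_def fun_eq_iff)
  then show ?thesis
    by blast
qed

lemma finite_Gprod_kernel: "finite (Gprod_kernel K Kc L (G :: nat \<Rightarrow> nat \<Rightarrow> 'f::{finite,comm_ring_1}))"
  by (simp add: Gprod_kernel_def finite_msg_space)

lemma Gprod_kernel_diff:
  "u \<in> Gprod_kernel K Kc L G \<Longrightarrow> v \<in> Gprod_kernel K Kc L G \<Longrightarrow> u - v \<in> Gprod_kernel K Kc L G"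
  by (simp add: Gprod_kernel_def msg_space_diff Gprod_diff)

lemma diff_in_Gprod_kernel:
  "u \<in> msg_space K L \<Longrightarrow> v \<in> msg_space K L \<Longrightarrow> Gprod K Kc L G u = Gprod K Kc L G v \<Longrightarrow>
    u - v \<in> Gprod_kernel K Kc L G"
  by (simp add: Gprod_kernel_def msg_space_diff Gprod_diff)

section \<open>Masking a linear scheme\<close>

lemma lin_tx_cong:
  assumes "\<And>k. k \<in> Z \<Longrightarrow> w k = w' k" and "\<And>r k j. k \<notin> Z \<Longrightarrow> c n r k j = 0"
  shows "lin_tx K L l t c n w = lin_tx K L l t c n w'"
  unfolding lin_tx_def using assms by (intro ext if_cong refl sum.cong) (metis mult_zero_left)

lemma lin_tx_family_in_msg_space:
  "(\<lambda>n. if n < N then lin_tx K L l t c n w else (\<lambda>_. 0)) \<in> msg_space N (\<Sum>n<N. lin_lengths L l t n)"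
proof -
  have "lin_lengths L l t n \<le> (\<Sum>n<N. lin_lengths L l t n)" if "n < N" for n
    using that by (intro member_le_sum) auto
  then show ?thesis
    by (fastforce simp: msg_space_def lin_tx_def lin_lengths_def)
qed

definition lin_decode :: "nat \<Rightarrow> nat \<Rightarrow> (nat \<Rightarrow> nat) \<Rightarrow> (nat set \<Rightarrow> nat \<Rightarrow> nat \<Rightarrow> nat \<Rightarrow> nat \<Rightarrow> 'f) \<Rightarrow>
    nat set \<Rightarrow> (nat \<Rightarrow> nat \<Rightarrow> 'f::comm_ring_1) \<Rightarrow> nat \<Rightarrow> nat \<Rightarrow> 'f" where
  "lin_decode Kc L T e A X =
     (\<lambda>i p. if i < Kc \<and> p < L then \<Sum>n\<in>A. \<Sum>s<T n. e A i p n s * X n s else 0)"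

lemma linear_scheme_decode:
  assumes "linear_scheme K N Nr Kc M L G Z l t c e"
    and "A \<subseteq> {..<N}" and "card A = Nr" and "w \<in> msg_space K L"
    and "\<And>n. n \<in> A \<Longrightarrow> X n = lin_tx K L l t c n w"
  shows "lin_decode Kc L (lin_lengths L l t) e A X = Gprod K Kc L G w"
  using assms unfolding linear_scheme_def
  by (auto simp: lin_decode_def Gprod_def lin_lengths_def fun_eq_iff)

(* A secure scheme draws its shared randomness from nat \<Rightarrow> 'f, so a mask is stored there
   along the Cantor pairing of its indices. *)
definition msgs_of_seq :: "(nat \<Rightarrow> 'f) \<Rightarrow> 'f msgs" where
  "msgs_of_seq q = (\<lambda>k p. q (prod_encode (k, p)))"

definition seq_of_msgs :: "'f msgs \<Rightarrow> nat \<Rightarrow> 'f" where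
  "seq_of_msgs v = (\<lambda>i. case prod_decode i of (k, p) \<Rightarrow> v k p)"

lemma msgs_of_seq_seq_of_msgs [simp]: "msgs_of_seq (seq_of_msgs v) = v"
  by (simp add: msgs_of_seq_def seq_of_msgs_def)

definition mask_pmf :: "nat \<Rightarrow> nat \<Rightarrow> nat \<Rightarrow> (nat \<Rightarrow> nat \<Rightarrow> 'f::{finite,field}) \<Rightarrow> (nat \<Rightarrow> 'f) pmf" where
  "mask_pmf K Kc L G = map_pmf seq_of_msgs (pmf_of_set (Gprod_kernel K Kc L G))"

definition masked_tx :: "nat \<Rightarrow> nat \<Rightarrow> nat \<Rightarrow> (nat \<Rightarrow> nat) \<Rightarrow> (nat \<Rightarrow> nat \<Rightarrow> nat \<Rightarrow> nat \<Rightarrow> 'f::comm_ring_1) \<Rightarrow>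
    nat \<Rightarrow> 'f msgs \<Rightarrow> (nat \<Rightarrow> 'f) \<Rightarrow> nat \<Rightarrow> 'f" where
  "masked_tx K L l t c n w q = lin_tx K L l t c n (restrict_msgs K L w + msgs_of_seq q)"

lemma set_mask_pmf: "set_pmf (mask_pmf K Kc L G) = seq_of_msgs ` Gprod_kernel K Kc L G"
  by (simp add: mask_pmf_def finite_Gprod_kernel Gprod_kernel_not_empty)

lemma masked_tx_cong:
  assumes "\<And>k. k \<in> Z \<Longrightarrow> w k = w' k" and "\<And>r k j. k \<notin> Z \<Longrightarrow> c n r k j = 0"
  shows "masked_tx K L l t c n w q = masked_tx K L l t c n w' q"
  unfolding masked_tx_def by (rule lin_tx_cong[where Z = Z]) (auto simp: assms restrict_msgs_def)

lemma masked_tx_beyond_length: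
  "lin_lengths L l t n \<le> s \<Longrightarrow> masked_tx K L l t c n w q s = 0"
  by (simp add: masked_tx_def lin_tx_def lin_lengths_def)

lemma masked_tx_decode:
  assumes "linear_scheme K N Nr Kc M L G Z l t c e"
    and "A \<subseteq> {..<N}" and "card A = Nr" and "w \<in> msg_space K L" and "q \<in> set_pmf (mask_pmf K Kc L G)"
  shows "lin_decode Kc L (lin_lengths L l t) e A (\<lambda>n. if n \<in> A then masked_tx K L l t c n w q else (\<lambda>_. 0))
    = Gprod K Kc L G w"
proof -
  obtain v where v: "v \<in> Gprod_kernel K Kc L G" and q: "q = seq_of_msgs v"
    using assms(5) by (auto simp: set_mask_pmf)
  then have "w + v \<in> msg_space K L" and "Gprod K Kc L G v = 0"
    using assms(4) by (auto simp: Gprod_kernel_def msg_space_add)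
  moreover have "masked_tx K L l t c n w q = lin_tx K L l t c n (w + v)" for n
    by (simp add: masked_tx_def q restrict_msgs_eq_self[OF assms(4)])
  ultimately show ?thesis
    using linear_scheme_decode[OF assms(1-3)] by (simp add: Gprod_add)
qed

lemma masked_tx_conditional_mutual_information_eq_0:
  fixes K Kc L :: nat and G :: "nat \<Rightarrow> nat \<Rightarrow> 'f::{finite,field}"
    and c :: "nat \<Rightarrow> nat \<Rightarrow> nat \<Rightarrow> nat \<Rightarrow> 'f"
  defines "P \<equiv> pair_pmf (pmf_of_set (msg_space K L)) (mask_pmf K Kc L G)"
  shows "prob_space.conditional_mutual_information (measure_pmf P) 2
     (count_space ((\<lambda>\<omega>. restrict_msgs K L (fst \<omega>)) ` space (measure_pmf P)))
     (count_space ((\<lambda>\<omega>. \<lambda>n. if n < N then masked_tx K L l t c n (fst \<omega>) (snd \<omega>) else (\<lambda>_. 0))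
        ` space (measure_pmf P)))
     (count_space ((\<lambda>\<omega>. Gprod K Kc L G (fst \<omega>)) ` space (measure_pmf P)))
     (\<lambda>\<omega>. restrict_msgs K L (fst \<omega>))
     (\<lambda>\<omega>. \<lambda>n. if n < N then masked_tx K L l t c n (fst \<omega>) (snd \<omega>) else (\<lambda>_. 0))
     (\<lambda>\<omega>. Gprod K Kc L G (fst \<omega>)) = 0"
proof -
  define tx where "tx u = (\<lambda>n. if n < N then lin_tx K L l t c n u else (\<lambda>_. 0))" for u :: "'f msgs"
  have X: "(\<lambda>\<omega>. \<lambda>n. if n < N then masked_tx K L l t c n (fst \<omega>) (snd \<omega>) else (\<lambda>_. 0)) =
      (\<lambda>\<omega>. tx (restrict_msgs K L (fst \<omega>) + msgs_of_seq (snd \<omega>)))"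
    by (simp add: masked_tx_def tx_def fun_eq_iff)
  have Z: "(\<lambda>\<omega>. Gprod K Kc L G (fst \<omega>)) = (\<lambda>\<omega>. Gprod K Kc L G (restrict_msgs K L (fst \<omega>)))"
    by (simp add: Gprod_restrict_msgs)
  have law: "map_pmf (\<lambda>q. tx (w + msgs_of_seq q)) (mask_pmf K Kc L G) =
      map_pmf (\<lambda>q. tx (w' + msgs_of_seq q)) (mask_pmf K Kc L G)"
    if "w \<in> restrict_msgs K L ` set_pmf (pmf_of_set (msg_space K L))"
      and "w' \<in> restrict_msgs K L ` set_pmf (pmf_of_set (msg_space K L))"
      and "Gprod K Kc L G w = Gprod K Kc L G w'" for w w'
  proof -
    have "w - w' \<in> Gprod_kernel K Kc L G"
      using that by (auto intro!: diff_in_Gprod_kernel restrict_msgs_in_msg_space)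
    then have "map_pmf (\<lambda>v. w + v) (pmf_of_set (Gprod_kernel K Kc L G)) =
        map_pmf (\<lambda>v. w' + v) (pmf_of_set (Gprod_kernel K Kc L G))"
      using map_pmf_plus_pmf_of_set_eq[OF finite_Gprod_kernel Gprod_kernel_not_empty Gprod_kernel_diff] by blast
    then have "map_pmf tx (map_pmf (\<lambda>v. w + v) (pmf_of_set (Gprod_kernel K Kc L G))) =
        map_pmf tx (map_pmf (\<lambda>v. w' + v) (pmf_of_set (Gprod_kernel K Kc L G)))"
      by simp
    then show ?thesis
      by (simp add: mask_pmf_def pmf.map_comp o_def)
  qed
  have "finite (range (restrict_msgs K L :: 'f msgs \<Rightarrow> 'f msgs))"
    by (rule finite_subset[OF _ finite_msg_space]) (auto intro: restrict_msgs_in_msg_space)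
  moreover have "finite (range (\<lambda>(w, q). tx (w + msgs_of_seq q)))"
    by (rule finite_subset[OF _ finite_msg_space]) (auto simp: tx_def intro: lin_tx_family_in_msg_space)
  ultimately show ?thesis
    unfolding P_def X Z
    by (intro conditional_mutual_information_eq_0_if_law_factors[where F = "\<lambda>w q. tx (w + msgs_of_seq q)"]
        law) simp_all
qed

lemma linear_scheme_imp_secure_scheme:
  fixes G :: "nat \<Rightarrow> nat \<Rightarrow> 'f::{finite,field}"
  assumes "linear_scheme K N Nr Kc M L G Z l t c e"
  shows "secure_scheme K N Nr Kc M L G Z (lin_lengths L l t) (masked_tx K L l t c) (mask_pmf K Kc L G)"
  unfolding secure_scheme_def Let_def
proof (intro conjI allI impI ballI masked_tx_conditional_mutual_information_eq_0)
  show "valid_assignment K N M Z"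
    using assms by (simp add: linear_scheme_def)
next
  fix n :: nat and w w' :: "'f msgs" and q :: "nat \<Rightarrow> 'f"
  assume "\<forall>k\<in>Z n. w k = w' k"
  then show "masked_tx K L l t c n w q = masked_tx K L l t c n w' q"
    using assms by (intro masked_tx_cong[where Z = "Z n"]) (auto simp: linear_scheme_def)
next
  fix n s :: nat and w :: "'f msgs" and q :: "nat \<Rightarrow> 'f"
  assume "lin_lengths L l t n \<le> s"
  then show "masked_tx K L l t c n w q s = 0"
    by (rule masked_tx_beyond_length)
next
  fix A :: "nat set"
  assume "A \<subseteq> {..<N} \<and> card A = Nr"
  then show "\<exists>dec. \<forall>w\<in>msg_space K L. \<forall>q\<in>set_pmf (mask_pmf K Kc L G).
      dec (\<lambda>n. if n \<in> A then masked_tx K L l t c n w q else (\<lambda>_. 0)) = Gprod K Kc L G w"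
    using masked_tx_decode[OF assms] by blast
qed

theorem theorem2:
  fixes K N Nr Kc m M L l :: nat
    and G :: "nat \<Rightarrow> nat \<Rightarrow> 'f::{finite,field}"
    and Z :: "nat \<Rightarrow> nat set"
    and t :: "nat \<Rightarrow> nat"
    and c :: "nat \<Rightarrow> nat \<Rightarrow> nat \<Rightarrow> nat \<Rightarrow> 'f"
    and e :: "nat set \<Rightarrow> nat \<Rightarrow> nat \<Rightarrow> nat \<Rightarrow> nat \<Rightarrow> 'f"
  assumes "0 < K" and "0 < L" and "1 \<le> Nr" and "Nr \<le> N" and "N dvd K"
    and "1 \<le> Kc" and "Kc \<le> K"
    and "1 \<le> m" and "m \<le> Nr"
    and "M = K div N * (N - Nr + m)"
    and "linear_scheme K N Nr Kc M L G Z l t c e"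
  shows "\<exists>(T :: nat \<Rightarrow> nat) (enc :: nat \<Rightarrow> 'f msgs \<Rightarrow> (nat \<Rightarrow> 'f) \<Rightarrow> nat \<Rightarrow> 'f) (Qd :: (nat \<Rightarrow> 'f) pmf).
           secure_scheme K N Nr Kc M L G Z T enc Qd \<and>
           comm_cost N Nr T L \<le> comm_cost N Nr (lin_lengths L l t) L"
  using linear_scheme_imp_secure_scheme[OF assms(11)] by blast

end
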